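(* Let $P$ be a finite $(3+1)$-free poset and let $v(P)=\{v(a):a\in P\}$ be its poset of views. Then there is a listing $(S_1,S_2,\dots,S_k)$ of the co-connected components of $v(P)$ such that for every $x\in S_i$ and every $y\in S_{i+1}$ we have $x<y$ in $v(P)$. Moreover, the preimages $v^{-1}(S_i)$, $i=1,\dots,k$, are exactly the tops of tangles, the bottoms of tangles, and the clone sets of $P$.
   Context: A poset $P$ is $(3+1)$-free if there are no $a,b,c,d\in P$ with $a<b<c$ and $d$ incomparable to each of $a,b,c$. For $a\in P$ let $D_a=\{x\in P:x<a\}$, $U_a=\{x\in P:x>a\}$. The view of $a$ is $v(a)=(D_a,P\setminus U_a)$, and the set $v(P)$ of views is partially ordered by $v(a)\le v(b)$ iff $D_a\subseteq D_b$ and $U_a\supseteq U_b$. A co-connected component of a poset is a connected component of its incomparability graph. Write $a\mathrel{\top}b$ if neither of $D_a,D_b$ contains the other, $a\mathrel{\bot}b$ if neither of $U_a,U_b$ contains the other, and $a\approx b$ if $D_a=D_b$ and $U_a=U_b$. A top of a tangle is a subset $A\subseteq P$ with $|A|\ge2$ that is a connected component of the graph on $P$ with edges $\{a,b\}$ for $a\mathrel{\top}b$; a bottom of a tangle is defined in the same way using $\bot$. A top $A$ and bottom $B$ are matched if there are distinct $a_1,a_2\in A$, $b_1,b_2\in B$ with $b_1<a_1$, $b_2<a_2$ and the pairs $\{a_1,a_2\},\{b_1,b_2\},\{b_1,a_2\},\{b_2,a_1\}$ incomparable; in a $(3+1)$-free poset this is a perfect matching between tops and bottoms of tangles, and a tangle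 is a matched pair $(A,B)$. A clone set of $P$ is an equivalence class of $\approx$ restricted to the vertices of $P$ not lying in any top or bottom of a tangle. *)

theory Defs
  imports Main
begin

text \<open>A finite poset is modelled as a finite subset P of a type with a partial order,
  carrying the induced order.\<close>

definition incomp :: "'a::order \<Rightarrow> 'a \<Rightarrow> bool" where
  "incomp x y \<longleftrightarrow> \<not> x \<le> y \<and> \<not> y \<le> x"

definition three_plus_one_free :: "'a::order set \<Rightarrow> bool" where
  "three_plus_one_free P \<longleftrightarrow>
     \<not> (\<exists>a\<in>P. \<exists>b\<in>P. \<exists>c\<in>P. \<exists>d\<in>P. a < b \<and> b < c \<and>
          incomp d a \<and> incomp d b \<and> incomp d c)"

definition downset :: "'a::order set \<Rightarrow> 'a \<Rightarrow> 'a set" where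
  "downset P a = {x \<in> P. x < a}"

definition upset :: "'a::order set \<Rightarrow> 'a \<Rightarrow> 'a set" where
  "upset P a = {x \<in> P. a < x}"

definition view :: "'a::order set \<Rightarrow> 'a \<Rightarrow> 'a set \<times> 'a set" where
  "view P a = (downset P a, P - upset P a)"

text \<open>Order on views: v(a) \<le> v(b) iff D_a \<subseteq> D_b and U_a \<supseteq> U_b,
  i.e. (since the second components are P - U) componentwise inclusion.\<close>
definition view_le :: "'a set \<Rightarrow> 'a set \<times> 'a set \<Rightarrow> 'a set \<times> 'a set \<Rightarrow> bool" where
  "view_le P x y \<longleftrightarrow> fst x \<subseteq> fst y \<and> P - snd x \<supseteq> P - snd y"

definition view_less :: "'a set \<Rightarrow> 'a set \<times> 'a set \<Rightarrow> 'a set \<times> 'a set \<Rightarrow> bool" where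
  "view_less P x y \<longleftrightarrow> view_le P x y \<and> x \<noteq> y"

definition components :: "'b set \<Rightarrow> ('b \<Rightarrow> 'b \<Rightarrow> bool) \<Rightarrow> 'b set set" where
  "components V R =
     {{y \<in> V. (x, y) \<in> {(u, w). u \<in> V \<and> w \<in> V \<and> (R u w \<or> R w u)}\<^sup>*} | x. x \<in> V}"

definition view_cocomponents :: "'a::order set \<Rightarrow> ('a set \<times> 'a set) set set" where
  "view_cocomponents P =
     components (view P ` P) (\<lambda>x y. \<not> view_le P x y \<and> \<not> view_le P y x)"

definition top_rel :: "'a::order set \<Rightarrow> 'a \<Rightarrow> 'a \<Rightarrow> bool" where
  "top_rel P a b \<longleftrightarrow> \<not> downset P a \<subseteq> downset P b \<and> \<not> downset P b \<subseteq> downset P a"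

definition bot_rel :: "'a::order set \<Rightarrow> 'a \<Rightarrow> 'a \<Rightarrow> bool" where
  "bot_rel P a b \<longleftrightarrow> \<not> upset P a \<subseteq> upset P b \<and> \<not> upset P b \<subseteq> upset P a"

definition tangle_tops :: "'a::order set \<Rightarrow> 'a set set" where
  "tangle_tops P = {A \<in> components P (top_rel P). card A \<ge> 2}"

definition tangle_bottoms :: "'a::order set \<Rightarrow> 'a set set" where
  "tangle_bottoms P = {B \<in> components P (bot_rel P). card B \<ge> 2}"

definition clone_sets :: "'a::order set \<Rightarrow> 'a set set" where
  "clone_sets P =
     (let R = P - \<Union>(tangle_tops P \<union> tangle_bottoms P)
      in R // {(a, b). a \<in> R \<and> b \<in> R \<and> downset P a = downset P b \<and> upset P a = upset P b})"

end

theory Submission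
  imports Defs
begin

(* In a (3+1)-free poset, a \<top> b forces U_a = U_b and a \<bottom> b forces D_a = D_b; hence no
   element is both \<top>- and \<bottom>-related, and v(a), v(b) are incomparable exactly when a \<top> b or
   a \<bottom> b, since D_a \<subset> D_b together with U_a \<subset> U_b would produce a 3+1. So the
   incomparability graph of v(P) pulls back along v to the union of the \<top>- and \<bottom>-graphs,
   up to identifying elements with equal views: the preimage of a co-connected component is a top,
   a bottom or a clone set. The listing exists for the co-connected components of any finite
   partial order: an element outside a co-connected component is comparable to all of it, and
   by transitivity it lies either above all of it or below all of it. *)

section \<open>Connected components of graphs\<close>

definition graph_edges :: "'b set \<Rightarrow> ('b \<Rightarrow> 'b \<Rightarrow> bool) \<Rightarrow> ('b \<times> 'b) set" where
  "graph_edges V R = {(u, w). u \<in> V \<and> w \<in> V \<and> (R u w \<or> R w u)}"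

definition component :: "'b set \<Rightarrow> ('b \<Rightarrow> 'b \<Rightarrow> bool) \<Rightarrow> 'b \<Rightarrow> 'b set" where
  "component V R x = {y \<in> V. (x, y) \<in> (graph_edges V R)\<^sup>*}"

lemma components_eq_image_component: "components V R = component V R ` V"
  unfolding components_def component_def graph_edges_def by blast

lemma sym_graph_edges: "sym (graph_edges V R)"
  unfolding graph_edges_def sym_def by blast

lemma component_self: "x \<in> V \<Longrightarrow> x \<in> component V R x"
  unfolding component_def by simp

lemma neighbour_in_component:
  "x \<in> V \<Longrightarrow> y \<in> V \<Longrightarrow> R x y \<or> R y x \<Longrightarrow> y \<in> component V R x"
  unfolding component_def graph_edges_def by blast

lemma component_eq:
  assumes "y \<in> component V R x"
  shows "component V R y = component V R x"
proof -
  let ?E = "graph_edges V R"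
  have xy: "(x, y) \<in> ?E\<^sup>*"
    using assms unfolding component_def by blast
  then have yx: "(y, x) \<in> ?E\<^sup>*"
    using sym_graph_edges sym_rtrancl symD by metis
  show ?thesis
    unfolding component_def using rtrancl_trans[OF xy] rtrancl_trans[OF yx] by blast
qed

lemma common_neighbour_in_component:
  assumes "x \<in> V" "z \<in> V" "R x z" and "y \<in> V" "R y z"
  shows "y \<in> component V R x"
proof -
  have "z \<in> component V R x"
    using assms by (simp add: neighbour_in_component)
  then have "component V R z = component V R x"
    by (rule component_eq)
  moreover have "y \<in> component V R z"
    using assms by (simp add: neighbour_in_component)
  ultimately show ?thesis
    by simp
qed

lemma components_eq_component:
  assumes "S \<in> components V R" and "x \<in> S"
  shows "S = component V R x"
proof -
  obtain s where S: "S = component V R s"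
    using assms(1) unfolding components_eq_image_component by blast
  with assms(2) have "component V R x = component V R s"
    by (simp add: component_eq)
  with S show ?thesis
    by simp
qed

lemma components_disjoint:
  assumes S: "S \<in> components V R" and T: "T \<in> components V R" and "S \<noteq> T"
  shows "S \<inter> T = {}"
proof -
  have "x \<notin> T" if "x \<in> S" for x
  proof
    assume "x \<in> T"
    then have "T = component V R x"
      by (rule components_eq_component[OF T])
    moreover have "S = component V R x"
      by (rule components_eq_component[OF S that])
    ultimately show False
      using \<open>S \<noteq> T\<close> by simp
  qed
  then show ?thesis
    by blast
qed

lemma component_isolated:
  assumes "x \<in> V" and "symp R" and "\<forall>y \<in> V. \<not> R x y"
  shows "component V R x = {x}"
proof -
  have "y = x" if "(x, y) \<in> (graph_edges V R)\<^sup>*" for y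
    using that
    by (cases rule: converse_rtranclE) (use assms in \<open>auto simp: graph_edges_def dest: sympD\<close>)
  then show ?thesis
    using assms(1) unfolding component_def by auto
qed

lemma two_le_card_component_iff:
  assumes "finite V" and "symp R" and "irreflp R" and "x \<in> V"
  shows "2 \<le> card (component V R x) \<longleftrightarrow> (\<exists>y \<in> V. R x y)"
proof
  assume card: "2 \<le> card (component V R x)"
  show "\<exists>y \<in> V. R x y"
  proof (rule ccontr)
    assume "\<not> (\<exists>y \<in> V. R x y)"
    then have "component V R x = {x}"
      by (intro component_isolated[OF assms(4,2)]) blast
    then show False
      using card by simp
  qed
next
  assume "\<exists>y \<in> V. R x y"
  then obtain y where y: "y \<in> V" "R x y" by blast
  then have "x \<noteq> y"
    using assms(3) by (auto simp: irreflp_def)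
  then have "2 = card {x, y}"
    by simp
  also have "\<dots> \<le> card (component V R x)"
  proof (rule card_mono)
    show "finite (component V R x)"
      using assms(1) unfolding component_def by simp
    show "{x, y} \<subseteq> component V R x"
      using assms(4) y by (simp add: component_self neighbour_in_component)
  qed
  finally show "2 \<le> card (component V R x)" .
qed

lemma nontrivial_components:
  assumes "finite V" and "symp R" and "irreflp R"
  shows "{A \<in> components V R. 2 \<le> card A} = component V R ` {x \<in> V. \<exists>y \<in> V. R x y}"
  unfolding components_eq_image_component
  using two_le_card_component_iff[OF assms] by auto

lemma Union_nontrivial_components:
  assumes "finite V" and "symp R" and "irreflp R"
  shows "\<Union> {A \<in> components V R. 2 \<le> card A} = {x \<in> V. \<exists>y \<in> V. R x y}"
proof -
  have "z \<in> V \<and> (\<exists>y \<in> V. R z y)"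
    if x: "x \<in> V" "\<exists>y \<in> V. R x y" and z: "z \<in> component V R x" for x z
  proof -
    have "z \<in> V"
      using z unfolding component_def by simp
    moreover have "2 \<le> card (component V R z)"
      using component_eq[OF z] two_le_card_component_iff[OF assms x(1)] x(2) by simp
    ultimately show ?thesis
      using two_le_card_component_iff[OF assms] by simp
  qed
  moreover have "x \<in> component V R x" if "x \<in> V" for x
    using that by (rule component_self)
  ultimately show ?thesis
    unfolding nontrivial_components[OF assms] by blast
qed

lemma component_disj_eq:
  assumes excl: "\<And>u v w. u \<in> V \<Longrightarrow> v \<in> V \<Longrightarrow> w \<in> V \<Longrightarrow> R1 u v \<Longrightarrow> R2 u w \<Longrightarrow> False"
    and sym: "symp R1" "symp R2"
    and x: "x \<in> V" "y \<in> V" "R1 x y"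
  shows "component V (\<lambda>u w. R1 u w \<or> R2 u w) x = component V R1 x"
proof -
  let ?E1 = "graph_edges V R1" and ?E = "graph_edges V (\<lambda>u w. R1 u w \<or> R2 u w)"
  have "?E1\<^sup>* \<subseteq> ?E\<^sup>*"
    by (rule rtrancl_mono) (auto simp: graph_edges_def)
  moreover have "(x, z) \<in> ?E1\<^sup>* \<and> (\<exists>w \<in> V. R1 z w)" if "(x, z) \<in> ?E\<^sup>*" for z
    using that
  proof (induction rule: rtrancl_induct)
    case base
    then show ?case using x by blast
  next
    case (step z z')
    then obtain w where "w \<in> V" "R1 z w" by blast
    moreover have "z \<in> V" "z' \<in> V" "R1 z z' \<or> R2 z z'"
      using step(2) sym unfolding graph_edges_def by (auto dest: sympD)
    ultimately have "R1 z z'" "z \<in> V" "z' \<in> V"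
      using excl by blast+
    then have "(z, z') \<in> ?E1" and "R1 z' z"
      using sym(1) unfolding graph_edges_def by (auto dest: sympD)
    then show ?case
      using step.IH \<open>z \<in> V\<close> by (meson rtrancl.rtrancl_into_rtrancl)
  qed
  ultimately show ?thesis
    unfolding component_def by blast
qed

lemma vimage_component:
  assumes R: "\<And>a b. a \<in> P \<Longrightarrow> b \<in> P \<Longrightarrow> R' a b \<longleftrightarrow> R (f a) (f b)" and a: "a \<in> P"
  shows "{b \<in> P. f b \<in> component (f ` P) R (f a)} = component P R' a \<union> {b \<in> P. f b = f a}"
proof -
  let ?E' = "graph_edges P R'" and ?E = "graph_edges (f ` P) R"
  have "(f a, f b) \<in> ?E\<^sup>*" if "(a, b) \<in> ?E'\<^sup>*" for b
    using that
  proof (induction rule: rtrancl_induct)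
    case (step b c)
    then have "(f b, f c) \<in> ?E"
      using R unfolding graph_edges_def by auto
    then show ?case
      using step.IH by (rule rtrancl_into_rtrancl[rotated])
  qed simp
  moreover have "\<forall>b \<in> P. f b = v \<longrightarrow> (a, b) \<in> ?E'\<^sup>* \<or> f b = f a" if "(f a, v) \<in> ?E\<^sup>*" for v
    using that
  proof (induction rule: rtrancl_induct)
    case (step v w)
    then obtain c where c: "c \<in> P" "v = f c" "(f a, f c) \<in> ?E\<^sup>*"
      unfolding graph_edges_def by blast
    show ?case
    proof (intro ballI impI)
      fix b assume b: "b \<in> P" "f b = w"
      then have "R' c b \<or> R' b c"
        using step(2) c R unfolding graph_edges_def by auto
      moreover have "(a, c) \<in> ?E'\<^sup>* \<or> f c = f a"
        using step.IH c by blast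
      ultimately have "(a, c) \<in> ?E'\<^sup>* \<and> (c, b) \<in> ?E' \<or> (a, b) \<in> ?E'"
        using R a b(1) c(1) unfolding graph_edges_def by auto
      then show "(a, b) \<in> ?E'\<^sup>* \<or> f b = f a"
        by (meson r_into_rtrancl rtrancl_into_rtrancl)
    qed
  qed simp
  ultimately show ?thesis
    using a unfolding component_def by auto
qed

section \<open>Co-connected components of a partial order\<close>

lemma comparable_outside_incomparability_component:
  assumes "x \<in> V" "y \<in> V" "y \<notin> component V (\<lambda>u w. \<not> le u w \<and> \<not> le w u) x"
  shows "x \<noteq> y \<and> (le x y \<or> le y x)"
proof
  show "x \<noteq> y"
    using assms(3) component_self[OF assms(1)] by auto
  show "le x y \<or> le y x"
    using assms(3) neighbour_in_component[OF assms(1,2), of "\<lambda>u w. \<not> le u w \<and> \<not> le w u"]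
    by auto
qed

lemma incomparability_component_propagate:
  assumes trans: "transp_on V le" and x: "x \<in> V"
    and y: "y \<in> V" "y \<notin> component V (\<lambda>u w. \<not> le u w \<and> \<not> le w u) x"
    and x': "x' \<in> component V (\<lambda>u w. \<not> le u w \<and> \<not> le w u) x"
  shows "(le x y \<longrightarrow> le x' y) \<and> (le y x \<longrightarrow> le y x')"
proof -
  let ?I = "\<lambda>u w. \<not> le u w \<and> \<not> le w u"
  have "(x, x') \<in> (graph_edges V ?I)\<^sup>*"
    using x' unfolding component_def by blast
  then show ?thesis
  proof (induction rule: rtrancl_induct)
    case (step u w)
    then have uw: "u \<in> V" "w \<in> V" "\<not> le u w" "\<not> le w u"
      unfolding graph_edges_def by auto
    have "w \<in> component V ?I x"
      using step(1,2) uw(2) unfolding component_def by (blast intro: rtrancl_into_rtrancl)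
    then have "y \<notin> component V ?I w"
      using y(2) by (simp add: component_eq)
    then have "le w y \<or> le y w"
      using comparable_outside_incomparability_component[OF uw(2) y(1)] by blast
    then show ?case
      using step.IH uw trans y(1) unfolding transp_on_def by blast
  qed simp
qed

lemma incomparability_components_above:
  assumes trans: "transp_on V le"
    and S: "S \<in> components V (\<lambda>u w. \<not> le u w \<and> \<not> le w u)"
    and T: "T \<in> components V (\<lambda>u w. \<not> le u w \<and> \<not> le w u)"
    and "S \<noteq> T" and x0: "x0 \<in> S" and y0: "y0 \<in> T" and "le x0 y0"
    and x: "x \<in> S" and y: "y \<in> T"
  shows "le x y"
proof -
  let ?C = "component V (\<lambda>u w. \<not> le u w \<and> \<not> le w u)"
  have S_eq: "S = ?C x0" and T_eq: "T = ?C y0"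
    using components_eq_component[OF S x0] components_eq_component[OF T y0] .
  have V: "x0 \<in> V" "y0 \<in> V" "x \<in> V"
    using x0 y0 x unfolding S_eq T_eq component_def by auto
  have disjoint: "S \<inter> T = {}"
    using components_disjoint[OF S T \<open>S \<noteq> T\<close>] .
  have "le x y0"
    using incomparability_component_propagate[OF trans V(1,2) _ x[unfolded S_eq]]
      \<open>le x0 y0\<close> disjoint y0 unfolding S_eq by blast
  then show "le x y"
    using incomparability_component_propagate[OF trans V(2,3) _ y[unfolded T_eq]]
      disjoint x unfolding T_eq by blast
qed

lemma incomparability_components_ordered:
  assumes trans: "transp_on V le"
    and S: "S \<in> components V (\<lambda>u w. \<not> le u w \<and> \<not> le w u)"
    and T: "T \<in> components V (\<lambda>u w. \<not> le u w \<and> \<not> le w u)"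
    and "S \<noteq> T"
  shows "(\<forall>x \<in> S. \<forall>y \<in> T. le x y \<and> x \<noteq> y) \<or> (\<forall>x \<in> S. \<forall>y \<in> T. le y x \<and> x \<noteq> y)"
proof -
  have disjoint: "S \<inter> T = {}"
    using components_disjoint[OF S T \<open>S \<noteq> T\<close>] .
  obtain x0 y0 where x0: "x0 \<in> V" "x0 \<in> S" and y0: "y0 \<in> V" "y0 \<in> T"
    using S T unfolding components_eq_image_component by (auto intro: component_self)
  have "y0 \<notin> S"
    using disjoint y0(2) by blast
  then have "y0 \<notin> component V (\<lambda>u w. \<not> le u w \<and> \<not> le w u) x0"
    using components_eq_component[OF S x0(2)] by simp
  then have "le x0 y0 \<or> le y0 x0"
    using comparable_outside_incomparability_component[OF x0(1) y0(1)] by blast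
  then show ?thesis
  proof
    assume "le x0 y0"
    then show ?thesis
      using incomparability_components_above[OF trans S T \<open>S \<noteq> T\<close> x0(2) y0(2)] disjoint by blast
  next
    assume "le y0 x0"
    then show ?thesis
      using incomparability_components_above[OF trans T S \<open>S \<noteq> T\<close>[symmetric] y0(2) x0(2)] disjoint
      by blast
  qed
qed

lemma strict_total_order_listing:
  assumes fin: "finite C" and trans: "transp_on C r" and irrefl: "irreflp_on C r"
    and total: "\<And>S T. S \<in> C \<Longrightarrow> T \<in> C \<Longrightarrow> S \<noteq> T \<Longrightarrow> r S T \<or> r T S"
  shows "\<exists>l. distinct l \<and> set l = C \<and> (\<forall>i. Suc i < length l \<longrightarrow> r (l ! i) (l ! Suc i))"
proof -
  define rank where "rank S = card {T \<in> C. r T S}" for S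
  have rank_less: "rank S < rank T" if "S \<in> C" "T \<in> C" "r S T" for S T
  proof -
    have "{U \<in> C. r U S} \<subset> {U \<in> C. r U T}"
      using that trans irrefl unfolding transp_on_def irreflp_on_def by blast
    then show ?thesis
      unfolding rank_def using fin by (simp add: psubset_card_mono)
  qed
  have "inj_on rank C"
    by (rule inj_onI) (metis total rank_less less_irrefl)
  then interpret folding_insort_key "(\<le>) :: nat \<Rightarrow> nat \<Rightarrow> bool" "(<)" C rank
    by unfold_locales
  obtain l where sorted: "sorted_wrt (<) (map rank l)" and set: "set l = C"
    and "length l = card C"
    using finite_set_strict_sorted[OF subset_refl fin] .
  then have dist: "distinct l"
    by (simp add: card_distinct)
  have "r (l ! i) (l ! Suc i)" if "Suc i < length l" for i
  proof -
    have "rank (l ! i) < rank (l ! Suc i)"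
      using sorted_wrt_nth_less[OF sorted, of i "Suc i"] that by simp
    moreover have "l ! i \<in> C" "l ! Suc i \<in> C" "l ! i \<noteq> l ! Suc i"
      using that set dist by (auto simp: nth_eq_iff_index_eq)
    ultimately show ?thesis
      using total rank_less by (meson less_asym)
  qed
  then show ?thesis
    using dist set by blast
qed

lemma incomparability_components_listing:
  assumes fin: "finite V" and trans: "transp_on V le" and antisym: "antisymp_on V le"
  shows "\<exists>Ss. distinct Ss \<and> set Ss = components V (\<lambda>u w. \<not> le u w \<and> \<not> le w u) \<and>
           (\<forall>i. Suc i < length Ss \<longrightarrow> (\<forall>x \<in> Ss ! i. \<forall>y \<in> Ss ! Suc i. le x y \<and> x \<noteq> y))"
proof -
  let ?C = "components V (\<lambda>u w. \<not> le u w \<and> \<not> le w u)"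
  define r where "r S T \<longleftrightarrow> (\<forall>x \<in> S. \<forall>y \<in> T. le x y \<and> x \<noteq> y)" for S T
  have sub: "S \<subseteq> V" and nonempty: "S \<noteq> {}" if "S \<in> ?C" for S
    using that component_self unfolding components_eq_image_component component_def by auto
  have "finite ?C"
    unfolding components_eq_image_component using fin by simp
  moreover have "irreflp_on ?C r"
    unfolding irreflp_on_def r_def using nonempty by blast
  moreover have "transp_on ?C r"
  proof (rule transp_onI)
    fix S T U assume STU: "S \<in> ?C" "T \<in> ?C" "U \<in> ?C" and "r S T" "r T U"
    show "r S U"
      unfolding r_def
    proof (intro ballI)
      fix x z assume xz: "x \<in> S" "z \<in> U"
      obtain y where y: "y \<in> T"
        using nonempty[OF STU(2)] by blast
      have "le x y" "x \<noteq> y" "le y z"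
        using \<open>r S T\<close> \<open>r T U\<close> xz y unfolding r_def by auto
      moreover have "x \<in> V" "y \<in> V" "z \<in> V"
        using sub STU xz y by blast+
      ultimately show "le x z \<and> x \<noteq> z"
        using trans antisym unfolding transp_on_def antisymp_on_def by metis
    qed
  qed
  moreover have "r S T \<or> r T S" if "S \<in> ?C" "T \<in> ?C" "S \<noteq> T" for S T
    using incomparability_components_ordered[OF trans that] unfolding r_def by blast
  ultimately show ?thesis
    using strict_total_order_listing[of ?C r] unfolding r_def by blast
qed

section \<open>(3+1)-free posets and their views\<close>

lemma incomp_iff: "incomp x y \<longleftrightarrow> x \<noteq> y \<and> \<not> x < y \<and> \<not> y < x"
  unfolding incomp_def by auto

lemma three_plus_one_freeD:
  assumes "three_plus_one_free P" and "x \<in> P" "y \<in> P" "z \<in> P" "d \<in> P" and "x < y" "y < z"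
    and "incomp d x" "incomp d y" "incomp d z"
  shows False
  using assms unfolding three_plus_one_free_def by blast

lemma top_rel_upset_subset:
  assumes tpf: "three_plus_one_free P" and ab: "a \<in> P" "b \<in> P" "top_rel P a b"
  shows "upset P a \<subseteq> upset P b"
proof
  fix z assume "z \<in> upset P a"
  then have z: "z \<in> P" "a < z" unfolding upset_def by auto
  obtain x where x: "x \<in> P" "x < a" "\<not> x < b"
    using ab(3) unfolding top_rel_def downset_def by blast
  obtain y where y: "y \<in> P" "y < b" "\<not> y < a"
    using ab(3) unfolding top_rel_def downset_def by blast
  show "z \<in> upset P b"
  proof (rule ccontr)
    assume "z \<notin> upset P b"
    then have "\<not> b < z" using z unfolding upset_def by auto
    then have "incomp b x" "incomp b a" "incomp b z"
      using x y z unfolding incomp_iff by (meson less_trans)+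
    then show False
      using three_plus_one_freeD[OF tpf x(1) ab(1) z(1) ab(2) x(2) z(2)] by blast
  qed
qed

lemma top_rel_upset_eq:
  assumes "three_plus_one_free P" and "a \<in> P" "b \<in> P" "top_rel P a b"
  shows "upset P a = upset P b"
proof
  show "upset P a \<subseteq> upset P b"
    using top_rel_upset_subset[OF assms] .
  have "top_rel P b a"
    using assms(4) unfolding top_rel_def by blast
  then show "upset P b \<subseteq> upset P a"
    using top_rel_upset_subset[OF assms(1,3,2)] by blast
qed

lemma bot_rel_downset_subset:
  assumes tpf: "three_plus_one_free P" and ab: "a \<in> P" "b \<in> P" "bot_rel P a b"
  shows "downset P a \<subseteq> downset P b"
proof
  fix x assume "x \<in> downset P a"
  then have x: "x \<in> P" "x < a" unfolding downset_def by auto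
  obtain y where y: "y \<in> P" "a < y" "\<not> b < y"
    using ab(3) unfolding bot_rel_def upset_def by blast
  obtain w where w: "w \<in> P" "b < w" "\<not> a < w"
    using ab(3) unfolding bot_rel_def upset_def by blast
  show "x \<in> downset P b"
  proof (rule ccontr)
    assume "x \<notin> downset P b"
    then have "\<not> x < b" using x unfolding downset_def by auto
    then have "incomp b x" "incomp b a" "incomp b y"
      using x y w unfolding incomp_iff by (meson less_trans)+
    then show False
      using three_plus_one_freeD[OF tpf x(1) ab(1) y(1) ab(2) x(2) y(2)] by blast
  qed
qed

lemma bot_rel_downset_eq:
  assumes "three_plus_one_free P" and "a \<in> P" "b \<in> P" "bot_rel P a b"
  shows "downset P a = downset P b"
proof
  show "downset P a \<subseteq> downset P b"
    using bot_rel_downset_subset[OF assms] .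
  have "bot_rel P b a"
    using assms(4) unfolding bot_rel_def by blast
  then show "downset P b \<subseteq> downset P a"
    using bot_rel_downset_subset[OF assms(1,3,2)] by blast
qed

lemma not_top_rel_and_bot_rel:
  assumes tpf: "three_plus_one_free P" and abc: "a \<in> P" "b \<in> P" "c \<in> P"
    and "top_rel P c a" and "bot_rel P c b"
  shows False
proof -
  have "upset P c = upset P a"
    using top_rel_upset_eq[OF tpf abc(3,1)] \<open>top_rel P c a\<close> .
  moreover have "downset P c = downset P b"
    using bot_rel_downset_eq[OF tpf abc(3,2)] \<open>bot_rel P c b\<close> .
  then have "top_rel P a b"
    using \<open>top_rel P c a\<close> unfolding top_rel_def by simp
  then have "upset P a = upset P b"
    by (rule top_rel_upset_eq[OF tpf abc(1,2)])
  ultimately show False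
    using \<open>bot_rel P c b\<close> unfolding bot_rel_def by simp
qed

lemma not_downset_and_upset_psubset:
  assumes tpf: "three_plus_one_free P" and ab: "a \<in> P" "b \<in> P"
    and D: "downset P a \<subset> downset P b" and U: "upset P a \<subset> upset P b"
  shows False
proof -
  obtain x where x: "x \<in> P" "x < b" "\<not> x < a"
    using D unfolding downset_def by blast
  obtain z where z: "z \<in> P" "b < z" "\<not> a < z"
    using U unfolding upset_def by blast
  have "\<not> a < b"
    using U ab unfolding upset_def by blast
  moreover have "\<not> b < a"
    using D ab unfolding downset_def by blast
  moreover have "a \<noteq> b"
    using D by blast
  ultimately have "incomp a x" "incomp a b" "incomp a z"
    using x z unfolding incomp_iff by (meson less_trans)+
  then show False
    using three_plus_one_freeD[OF tpf x(1) ab(2) z(1) ab(1) x(2) z(2)] by blast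
qed

lemma view_le_view_iff:
  "view_le P (view P a) (view P b) \<longleftrightarrow> downset P a \<subseteq> downset P b \<and> upset P b \<subseteq> upset P a"
  unfolding view_le_def view_def by (auto simp: upset_def)

lemma view_eq_iff: "view P a = view P b \<longleftrightarrow> downset P a = downset P b \<and> upset P a = upset P b"
  unfolding view_def upset_def by blast

lemma transp_view_le: "transp (view_le P)"
  unfolding transp_def view_le_def by blast

lemma antisymp_on_view_le: "antisymp_on (view P ` P) (view_le P)"
  unfolding antisymp_on_def by (auto simp: view_le_view_iff view_eq_iff)

lemma views_incomparable_iff:
  assumes tpf: "three_plus_one_free P" and ab: "a \<in> P" "b \<in> P"
  shows "\<not> view_le P (view P a) (view P b) \<and> \<not> view_le P (view P b) (view P a) \<longleftrightarrow>
    top_rel P a b \<or> bot_rel P a b"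
proof
  assume "top_rel P a b \<or> bot_rel P a b"
  then show "\<not> view_le P (view P a) (view P b) \<and> \<not> view_le P (view P b) (view P a)"
    unfolding view_le_view_iff top_rel_def bot_rel_def by blast
next
  assume incomparable: "\<not> view_le P (view P a) (view P b) \<and> \<not> view_le P (view P b) (view P a)"
  show "top_rel P a b \<or> bot_rel P a b"
  proof (rule ccontr)
    assume "\<not> (top_rel P a b \<or> bot_rel P a b)"
    then have D: "downset P a \<subseteq> downset P b \<or> downset P b \<subseteq> downset P a"
      and U: "upset P a \<subseteq> upset P b \<or> upset P b \<subseteq> upset P a"
      unfolding top_rel_def bot_rel_def by blast+
    show False
    proof (cases "downset P a \<subseteq> downset P b")
      case True
      with incomparable U have "downset P a \<subset> downset P b" "upset P a \<subset> upset P b"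
        unfolding view_le_view_iff by blast+
      then show False
        by (rule not_downset_and_upset_psubset[OF tpf ab])
    next
      case False
      with incomparable D U have "downset P b \<subset> downset P a" "upset P b \<subset> upset P a"
        unfolding view_le_view_iff by blast+
      then show False
        by (rule not_downset_and_upset_psubset[OF tpf ab(2,1)])
    qed
  qed
qed

lemma symp_top_rel: "symp (top_rel P)"
  unfolding symp_def top_rel_def by blast

lemma symp_bot_rel: "symp (bot_rel P)"
  unfolding symp_def bot_rel_def by blast

lemma irreflp_top_rel: "irreflp (top_rel P)"
  unfolding irreflp_def top_rel_def by blast

lemma irreflp_bot_rel: "irreflp (bot_rel P)"
  unfolding irreflp_def bot_rel_def by blast

lemma tangle_tops_eq:
  assumes "finite P"
  shows "tangle_tops P = component P (top_rel P) ` {a \<in> P. \<exists>c \<in> P. top_rel P a c}"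
  unfolding tangle_tops_def
  by (rule nontrivial_components[OF assms symp_top_rel irreflp_top_rel])

lemma tangle_bottoms_eq:
  assumes "finite P"
  shows "tangle_bottoms P = component P (bot_rel P) ` {a \<in> P. \<exists>c \<in> P. bot_rel P a c}"
  unfolding tangle_bottoms_def
  by (rule nontrivial_components[OF assms symp_bot_rel irreflp_bot_rel])

section \<open>Tangles and clone sets\<close>

lemma clone_sets_eq:
  assumes "finite P"
  shows "clone_sets P =
    (\<lambda>a. {b \<in> P. view P b = view P a}) ` {a \<in> P. \<forall>c \<in> P. \<not> top_rel P a c \<and> \<not> bot_rel P a c}"
proof -
  define I where "I = {a \<in> P. \<forall>c \<in> P. \<not> top_rel P a c \<and> \<not> bot_rel P a c}"
  define clone where
    "clone = {(a, b). a \<in> I \<and> b \<in> I \<and> downset P a = downset P b \<and> upset P a = upset P b}"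
  have "P - \<Union> (tangle_tops P \<union> tangle_bottoms P) = I"
    unfolding I_def tangle_tops_def tangle_bottoms_def Union_Un_distrib
      Union_nontrivial_components[OF assms symp_top_rel irreflp_top_rel]
      Union_nontrivial_components[OF assms symp_bot_rel irreflp_bot_rel] by blast
  then have "clone_sets P = I // clone"
    unfolding clone_sets_def clone_def Let_def by simp
  also have "\<dots> = (\<lambda>a. clone `` {a}) ` I"
    unfolding quotient_def by blast
  also have "\<dots> = (\<lambda>a. {b \<in> P. view P b = view P a}) ` I"
  proof (rule image_cong[OF refl])
    fix a assume a: "a \<in> I"
    have "b \<in> I" if "b \<in> P" "view P b = view P a" for b
      using a that unfolding I_def view_eq_iff top_rel_def bot_rel_def by simp
    then show "clone `` {a} = {b \<in> P. view P b = view P a}"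
      using a unfolding clone_def I_def view_eq_iff by auto
  qed
  finally show ?thesis
    unfolding I_def .
qed

lemma component_top_or_bot_rel_Un_same_view_eq_top:
  assumes tpf: "three_plus_one_free P" and a: "a \<in> P" and c: "c \<in> P" "top_rel P a c"
  shows "component P (\<lambda>u w. top_rel P u w \<or> bot_rel P u w) a \<union> {b \<in> P. view P b = view P a} =
    component P (top_rel P) a"
proof -
  have "b \<in> component P (top_rel P) a" if "b \<in> P" "view P b = view P a" for b
  proof (rule common_neighbour_in_component[where R = "top_rel P", OF a c])
    show "b \<in> P" "top_rel P b c"
      using that c(2) unfolding view_eq_iff top_rel_def by auto
  qed
  moreover have "component P (\<lambda>u w. top_rel P u w \<or> bot_rel P u w) a = component P (top_rel P) a"
    by (rule component_disj_eq[OF _ symp_top_rel symp_bot_rel a c])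
      (use not_top_rel_and_bot_rel[OF tpf] in blast)
  ultimately show ?thesis
    by blast
qed

lemma component_top_or_bot_rel_Un_same_view_eq_bot:
  assumes tpf: "three_plus_one_free P" and a: "a \<in> P" and c: "c \<in> P" "bot_rel P a c"
  shows "component P (\<lambda>u w. top_rel P u w \<or> bot_rel P u w) a \<union> {b \<in> P. view P b = view P a} =
    component P (bot_rel P) a"
proof -
  have "b \<in> component P (bot_rel P) a" if "b \<in> P" "view P b = view P a" for b
  proof (rule common_neighbour_in_component[where R = "bot_rel P", OF a c])
    show "b \<in> P" "bot_rel P b c"
      using that c(2) unfolding view_eq_iff bot_rel_def by auto
  qed
  moreover have "(\<lambda>u w. top_rel P u w \<or> bot_rel P u w) = (\<lambda>u w. bot_rel P u w \<or> top_rel P u w)"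
    by (intro ext) blast
  moreover have "component P (\<lambda>u w. bot_rel P u w \<or> top_rel P u w) a = component P (bot_rel P) a"
    by (rule component_disj_eq[OF _ symp_bot_rel symp_top_rel a c])
      (use not_top_rel_and_bot_rel[OF tpf] in blast)
  ultimately show ?thesis
    by auto
qed

lemma vimage_view_cocomponent:
  assumes tpf: "three_plus_one_free P" and a: "a \<in> P"
  shows "{b \<in> P. view P b \<in>
      component (view P ` P) (\<lambda>x y. \<not> view_le P x y \<and> \<not> view_le P y x) (view P a)} =
    (if \<exists>c \<in> P. top_rel P a c then component P (top_rel P) a
     else if \<exists>c \<in> P. bot_rel P a c then component P (bot_rel P) a
     else {b \<in> P. view P b = view P a})"
proof -
  let ?R = "\<lambda>u w. top_rel P u w \<or> bot_rel P u w"
  have vimage: "{b \<in> P. view P b \<in> component (view P ` P)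
      (\<lambda>x y. \<not> view_le P x y \<and> \<not> view_le P y x) (view P a)} =
      component P ?R a \<union> {b \<in> P. view P b = view P a}"
    by (rule vimage_component[OF _ a]) (simp add: views_incomparable_iff[OF tpf])
  consider (top) c where "c \<in> P" "top_rel P a c"
    | (bot) c where "c \<in> P" "bot_rel P a c" "\<not> (\<exists>c \<in> P. top_rel P a c)"
    | (isolated) "\<forall>c \<in> P. \<not> ?R a c"
    by blast
  then show ?thesis
  proof cases
    case (top c)
    then show ?thesis
      using vimage component_top_or_bot_rel_Un_same_view_eq_top[OF tpf a top(1,2)] by auto
  next
    case (bot c)
    then show ?thesis
      using vimage component_top_or_bot_rel_Un_same_view_eq_bot[OF tpf a bot(1,2)] by auto
  next
    case isolated
    have "symp ?R"
      using symp_top_rel symp_bot_rel unfolding symp_def by blast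
    then have "component P ?R a = {a}"
      using component_isolated[OF a] isolated by blast
    then show ?thesis
      using vimage isolated a by auto
  qed
qed

lemma vimage_view_cocomponents:
  assumes fin: "finite P" and tpf: "three_plus_one_free P"
  shows "(\<lambda>S. {a \<in> P. view P a \<in> S}) ` view_cocomponents P =
    tangle_tops P \<union> tangle_bottoms P \<union> clone_sets P"
proof -
  let ?I = "\<lambda>x y. \<not> view_le P x y \<and> \<not> view_le P y x"
  let ?top = "\<lambda>a. \<exists>c \<in> P. top_rel P a c" and ?bot = "\<lambda>a. \<exists>c \<in> P. bot_rel P a c"
  have "(\<lambda>S. {a \<in> P. view P a \<in> S}) ` view_cocomponents P =
      (\<lambda>a. {b \<in> P. view P b \<in> component (view P ` P) ?I (view P a)}) ` P"
    unfolding view_cocomponents_def components_eq_image_component by (simp add: image_image)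
  also have "\<dots> = (\<lambda>a. if ?top a then component P (top_rel P) a
      else if ?bot a then component P (bot_rel P) a
      else {b \<in> P. view P b = view P a}) ` P"
    using vimage_view_cocomponent[OF tpf] by simp
  also have "\<dots> = component P (top_rel P) ` {a \<in> P. ?top a}
      \<union> component P (bot_rel P) ` {a \<in> P. \<not> ?top a \<and> ?bot a}
      \<union> (\<lambda>a. {b \<in> P. view P b = view P a}) ` {a \<in> P. \<not> ?top a \<and> \<not> ?bot a}"
    by auto
  also have "{a \<in> P. \<not> ?top a \<and> ?bot a} = {a \<in> P. ?bot a}"
    using not_top_rel_and_bot_rel[OF tpf] by blast
  also have "{a \<in> P. \<not> ?top a \<and> \<not> ?bot a} = {a \<in> P. \<forall>c \<in> P. \<not> top_rel P a c \<and> \<not> bot_rel P a c}"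
    by blast
  finally show ?thesis
    unfolding tangle_tops_eq[OF fin] tangle_bottoms_eq[OF fin] clone_sets_eq[OF fin] .
qed

theorem proposition2p13:
  fixes P :: "'a::order set"
  assumes "finite P" and "three_plus_one_free P"
  shows "\<exists>Ss. distinct Ss \<and> set Ss = view_cocomponents P \<and>
           (\<forall>i. Suc i < length Ss \<longrightarrow>
              (\<forall>x \<in> Ss ! i. \<forall>y \<in> Ss ! Suc i. view_less P x y)) \<and>
           {{a \<in> P. view P a \<in> S} | S. S \<in> set Ss} =
             tangle_tops P \<union> tangle_bottoms P \<union> clone_sets P"
proof -
  obtain Ss where "distinct Ss" and set: "set Ss = view_cocomponents P"
    and "\<forall>i. Suc i < length Ss \<longrightarrow> (\<forall>x \<in> Ss ! i. \<forall>y \<in> Ss ! Suc i. view_less P x y)"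
    using incomparability_components_listing[OF finite_imageI[OF assms(1)]
        transp_on_subset[OF transp_view_le subset_UNIV] antisymp_on_view_le]
    unfolding view_cocomponents_def view_less_def by blast
  moreover have "{{a \<in> P. view P a \<in> S} | S. S \<in> set Ss} =
      tangle_tops P \<union> tangle_bottoms P \<union> clone_sets P"
    unfolding Setcompr_eq_image set by (rule vimage_view_cocomponents[OF assms])
  ultimately show ?thesis
    by blast
qed

end
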